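(* Assume Assumption (I). Let $u_k\in V$ and $\epsilon_k>0$ be given. Then there exists $L\in\{0\}\cup\{\tilde L\gamma^l: l\in\mathbb N_0\}$ such that the (unique) minimizer $u_{k+1}$ of problem (Q$_{k,L}$) satisfies the descent condition (D$_{k,L}$); in particular $L_k$ and $u_{k+1}$ in Algorithm A are well defined. Moreover, if the sequence $(u_k)$ generated by Algorithm A is bounded in $V$, then $(L_k)$ is bounded.
   Context: Standing assumptions: $\Omega\subset\mathbb R^d$ bounded Lipschitz domain; $V$ real Hilbert space with inner product $\langle\cdot,\cdot\rangle_V$, $V\subset L^2(\Omega)$ with compact and dense embedding; $V^*$ dual. $F:V\to\mathbb R$ weakly lower semicontinuous, bounded below by an affine function, continuously Fréchet differentiable. $\alpha>0$, $\beta>0$, $p\in(0,1)$. Assumption (I): the standing assumptions hold; $F'$ is completely continuous ($u_n\rightharpoonup u$ in $V$ implies $F'(u_n)\to F'(u)$ in $V^*$); and $F':V\to V^*$ is Lipschitz continuous on bounded sets. For $\epsilon>0$, $\psi_\epsilon(t)=\frac p2\frac{t}{\epsilon^{2-p}}+(1-\frac p2)\epsilon^p$ if $t\in[0,\epsilon^2)$, $\psi_\epsilon(t)=t^{p/2}$ if $t\ge\epsilon^2$, $\psi_\epsilon'(t)=\frac p2\min(\epsilon^{p-2},t^{(p-2)/2})$. Algorithm A: choose a monotonically decreasing sequence $\epsilon_k\searrow0$, constants $\gamma>1$, $\tilde L>0$, and $u_0\in V$. Given $u_k$, for $L\ge0$ let problem (Q$_{k,L}$) be $\min_{u\in V} F(u_k)+F'(u_k)(u-u_k)+\frac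 L2\|u-u_k\|_V^2+\frac\alpha2\|u\|_V^2+\beta\int_\Omega\big[\psi_{\epsilon_k}(u_k^2)+\psi_{\epsilon_k}'(u_k^2)(u^2-u_k^2)\big]dx$ (strongly convex, unique minimizer), and let (D$_{k,L}$) be the condition $F(u_{k+1})\le F(u_k)+F'(u_k)(u_{k+1}-u_k)+L\|u_{k+1}-u_k\|_V^2$ for its minimizer $u_{k+1}$. $L_k$ is the smallest $L\in\{0\}\cup\{\tilde L\gamma^l:l\ge0\}$ for which (D$_{k,L}$) holds, and $u_{k+1}$ is the corresponding minimizer; then $k\mapsto k+1$. *)

theory Defs
  imports "HOL-Analysis.Analysis"
begin

definition bounded_lipschitz_domain :: "'a::euclidean_space set \<Rightarrow> bool" where
  "bounded_lipschitz_domain \<Omega> \<longleftrightarrow>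
     open \<Omega> \<and> connected \<Omega> \<and> \<Omega> \<noteq> {} \<and> bounded \<Omega> \<and>
     (\<forall>x\<in>frontier \<Omega>. \<exists>r>0. \<exists>n::'a. \<exists>g::'a \<Rightarrow> real. \<exists>C.
        norm n = 1 \<and> C-lipschitz_on {z. z \<bullet> n = 0} g \<and>
        \<Omega> \<inter> ball x r = {y \<in> ball x r. y \<bullet> n < g (y - (y \<bullet> n) *\<^sub>R n)})"

definition L2fun :: "'a::euclidean_space set \<Rightarrow> ('a \<Rightarrow> real) \<Rightarrow> bool" where
  "L2fun \<Omega> f \<longleftrightarrow> f \<in> borel_measurable (lebesgue_on \<Omega>) \<and>
                  integrable (lebesgue_on \<Omega>) (\<lambda>x. (f x)\<^sup>2)"

definition L2norm :: "'a::euclidean_space set \<Rightarrow> ('a \<Rightarrow> real) \<Rightarrow> real" where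
  "L2norm \<Omega> f = sqrt (\<integral>x. (f x)\<^sup>2 \<partial>lebesgue_on \<Omega>)"

text \<open>The Hilbert space V (a type of class real_inner + complete_space) is identified with
  a subspace of L^2(Omega) through iota, which assigns to each element a representative.\<close>
definition compact_dense_L2_embedding ::
    "'a::euclidean_space set \<Rightarrow> ('v::{real_inner,complete_space} \<Rightarrow> 'a \<Rightarrow> real) \<Rightarrow> bool" where
  "compact_dense_L2_embedding \<Omega> \<iota> \<longleftrightarrow>
     (\<forall>u. L2fun \<Omega> (\<iota> u)) \<and>
     (\<forall>u w. AE x in lebesgue_on \<Omega>. \<iota> (u + w) x = \<iota> u x + \<iota> w x) \<and>
     (\<forall>c u. AE x in lebesgue_on \<Omega>. \<iota> (c *\<^sub>R u) x = c * \<iota> u x) \<and>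
     (\<forall>u w. (AE x in lebesgue_on \<Omega>. \<iota> u x = \<iota> w x) \<longrightarrow> u = w) \<and>
     (\<exists>K. \<forall>u. L2norm \<Omega> (\<iota> u) \<le> K * norm u) \<and>
     (\<forall>s::nat \<Rightarrow> 'v. bounded (range s) \<longrightarrow>
        (\<exists>r f. strict_mono r \<and> L2fun \<Omega> f \<and>
               (\<lambda>n. L2norm \<Omega> (\<lambda>x. \<iota> (s (r n)) x - f x)) \<longlonglongrightarrow> 0)) \<and>
     (\<forall>f. L2fun \<Omega> f \<longrightarrow> (\<forall>e>0. \<exists>u. L2norm \<Omega> (\<lambda>x. \<iota> u x - f x) < e))"

definition weakly_conv :: "(nat \<Rightarrow> 'v::real_inner) \<Rightarrow> 'v \<Rightarrow> bool" where
  "weakly_conv s u \<longleftrightarrow> (\<forall>w. (\<lambda>n. inner (s n) w) \<longlonglongrightarrow> inner u w)"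

definition weakly_lsc :: "('v::real_inner \<Rightarrow> real) \<Rightarrow> bool" where
  "weakly_lsc F \<longleftrightarrow> (\<forall>s u. weakly_conv s u \<longrightarrow>
                       ereal (F u) \<le> liminf (\<lambda>n. ereal (F (s n))))"

definition bounded_below_affine :: "('v::real_normed_vector \<Rightarrow> real) \<Rightarrow> bool" where
  "bounded_below_affine F \<longleftrightarrow> (\<exists>l c. bounded_linear l \<and> (\<forall>u. l u + c \<le> F u))"

definition standing_F :: "('v::{real_inner,complete_space} \<Rightarrow> real) \<Rightarrow> ('v \<Rightarrow> ('v \<Rightarrow>\<^sub>L real)) \<Rightarrow> bool" where
  "standing_F F F' \<longleftrightarrow> weakly_lsc F \<and> bounded_below_affine F \<and>
      (\<forall>u. (F has_derivative blinfun_apply (F' u)) (at u)) \<and> continuous_on UNIV F'"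

definition assumption_I_F :: "('v::{real_inner,complete_space} \<Rightarrow> real) \<Rightarrow> ('v \<Rightarrow> ('v \<Rightarrow>\<^sub>L real)) \<Rightarrow> bool" where
  "assumption_I_F F F' \<longleftrightarrow> standing_F F F' \<and>
      (\<forall>s u. weakly_conv s u \<longrightarrow> (\<lambda>n. F' (s n)) \<longlonglongrightarrow> F' u) \<and>
      (\<forall>B. bounded B \<longrightarrow> (\<exists>M. \<forall>u\<in>B. \<forall>w\<in>B. norm (F' u - F' w) \<le> M * norm (u - w)))"

definition psi :: "real \<Rightarrow> real \<Rightarrow> real \<Rightarrow> real" where
  "psi p \<epsilon> t = (if t < \<epsilon>\<^sup>2 then p / 2 * t / \<epsilon> powr (2 - p) + (1 - p / 2) * \<epsilon> powr p
                 else t powr (p / 2))"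

text \<open>psi' = p/2 min(eps^(p-2), t^((p-2)/2)); written piecewise so that t = 0 gives
  p/2 eps^(p-2) (t^((p-2)/2) = +infinity there, while Isabelle's 0 powr a is 0).\<close>
definition dpsi :: "real \<Rightarrow> real \<Rightarrow> real \<Rightarrow> real" where
  "dpsi p \<epsilon> t = (if t < \<epsilon>\<^sup>2 then p / 2 * \<epsilon> powr (p - 2) else p / 2 * t powr ((p - 2) / 2))"

definition Qobj ::
  "'a::euclidean_space set \<Rightarrow> ('v::{real_inner,complete_space} \<Rightarrow> 'a \<Rightarrow> real) \<Rightarrow>
   ('v \<Rightarrow> real) \<Rightarrow> ('v \<Rightarrow> ('v \<Rightarrow>\<^sub>L real)) \<Rightarrow> real \<Rightarrow> real \<Rightarrow> real \<Rightarrow>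
   real \<Rightarrow> 'v \<Rightarrow> real \<Rightarrow> 'v \<Rightarrow> real" where
  "Qobj \<Omega> \<iota> F F' \<alpha> \<beta> p \<epsilon> uk L u =
     F uk + F' uk (u - uk) + L / 2 * (norm (u - uk))\<^sup>2 + \<alpha> / 2 * (norm u)\<^sup>2
     + \<beta> * (\<integral>x. psi p \<epsilon> ((\<iota> uk x)\<^sup>2) + dpsi p \<epsilon> ((\<iota> uk x)\<^sup>2) * ((\<iota> u x)\<^sup>2 - (\<iota> uk x)\<^sup>2)
              \<partial>lebesgue_on \<Omega>)"

definition is_Qmin ::
  "'a::euclidean_space set \<Rightarrow> ('v::{real_inner,complete_space} \<Rightarrow> 'a \<Rightarrow> real) \<Rightarrow>
   ('v \<Rightarrow> real) \<Rightarrow> ('v \<Rightarrow> ('v \<Rightarrow>\<^sub>L real)) \<Rightarrow> real \<Rightarrow> real \<Rightarrow> real \<Rightarrow>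
   real \<Rightarrow> 'v \<Rightarrow> real \<Rightarrow> 'v \<Rightarrow> bool" where
  "is_Qmin \<Omega> \<iota> F F' \<alpha> \<beta> p \<epsilon> uk L u \<longleftrightarrow>
     (\<forall>w. Qobj \<Omega> \<iota> F F' \<alpha> \<beta> p \<epsilon> uk L u \<le> Qobj \<Omega> \<iota> F F' \<alpha> \<beta> p \<epsilon> uk L w)"

definition descent ::
  "('v::{real_inner,complete_space} \<Rightarrow> real) \<Rightarrow> ('v \<Rightarrow> ('v \<Rightarrow>\<^sub>L real)) \<Rightarrow> 'v \<Rightarrow> real \<Rightarrow> 'v \<Rightarrow> bool" where
  "descent F F' uk L u \<longleftrightarrow> F u \<le> F uk + F' uk (u - uk) + L * (norm (u - uk))\<^sup>2"

definition Lset :: "real \<Rightarrow> real \<Rightarrow> real set" where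
  "Lset Ltil \<gamma> = {0} \<union> range (\<lambda>l::nat. Ltil * \<gamma> ^ l)"

definition algorithm_A ::
  "'a::euclidean_space set \<Rightarrow> ('v::{real_inner,complete_space} \<Rightarrow> 'a \<Rightarrow> real) \<Rightarrow>
   ('v \<Rightarrow> real) \<Rightarrow> ('v \<Rightarrow> ('v \<Rightarrow>\<^sub>L real)) \<Rightarrow> real \<Rightarrow> real \<Rightarrow> real \<Rightarrow>
   real \<Rightarrow> real \<Rightarrow> (nat \<Rightarrow> real) \<Rightarrow> (nat \<Rightarrow> 'v) \<Rightarrow> (nat \<Rightarrow> real) \<Rightarrow> bool" where
  "algorithm_A \<Omega> \<iota> F F' \<alpha> \<beta> p \<gamma> Ltil eps u Lk \<longleftrightarrow>
     \<gamma> > 1 \<and> Ltil > 0 \<and> decseq eps \<and> (\<forall>k. eps k > 0) \<and> eps \<longlonglongrightarrow> 0 \<and>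
     (\<forall>k. Lk k \<in> Lset Ltil \<gamma> \<and>
          is_Qmin \<Omega> \<iota> F F' \<alpha> \<beta> p (eps k) (u k) (Lk k) (u (Suc k)) \<and>
          descent F F' (u k) (Lk k) (u (Suc k)) \<and>
          (\<forall>L'\<in>Lset Ltil \<gamma>. L' < Lk k \<longrightarrow>
             (\<forall>w. is_Qmin \<Omega> \<iota> F F' \<alpha> \<beta> p (eps k) (u k) L' w \<longrightarrow> \<not> descent F F' (u k) L' w)))"

end

theory Submission
  imports Defs
begin

text \<open>Expanding the linearised penalty, the objective of (Q_{k,L}) is an affine term plus
  L/2 |u - u_k|^2 + \<alpha>/2 |u|^2 + \<beta> \<integral> \<psi>'(u_k^2) u^2 with a bounded nonnegative weight; it is
  therefore continuous and strongly convex, so a minimising sequence is Cauchy and converges to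
  the unique minimiser. Comparing its value with the value at u_k bounds the minimiser by a
  constant depending only on |u_k| and |F'(u_k)| -- not on \<epsilon> or L, because
  \<psi>'(t) t \<le> p/2 (1 + t). On a ball containing u_k and all these minimisers F' is M-Lipschitz,
  and the mean value theorem gives the descent condition for every L \<ge> M. Some L~ \<gamma>^l exceeds
  M; and if (u_k) is bounded, one M serves all k, so minimality of L_k forces
  L_k \<le> max L~ (\<gamma> M).\<close>

lemma abs_power2_add_diff_le:
  fixes a h \<eta> :: real
  assumes "\<eta> > 0"
  shows "\<bar>(a + h)\<^sup>2 - a\<^sup>2\<bar> \<le> \<eta> * a\<^sup>2 + (1 + 1/\<eta>) * h\<^sup>2"
proof -
  have "0 \<le> (\<eta> * \<bar>a\<bar> - \<bar>h\<bar>)\<^sup>2 / \<eta>" using assms by simp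
  also have "(\<eta> * \<bar>a\<bar> - \<bar>h\<bar>)\<^sup>2 / \<eta> = \<eta> * a\<^sup>2 + h\<^sup>2/\<eta> - 2 * \<bar>a\<bar> * \<bar>h\<bar>"
    using assms by (simp add: power2_eq_square field_simps)
  finally have young: "2 * \<bar>a\<bar> * \<bar>h\<bar> \<le> \<eta> * a\<^sup>2 + h\<^sup>2/\<eta>" by simp
  have "\<bar>(a + h)\<^sup>2 - a\<^sup>2\<bar> = \<bar>2 * a * h + h\<^sup>2\<bar>" by (simp add: power2_eq_square algebra_simps)
  also have "\<dots> \<le> 2 * \<bar>a\<bar> * \<bar>h\<bar> + h\<^sup>2" by (simp add: abs_mult abs_triangle_ineq[THEN order_trans])
  finally show ?thesis using young by (simp add: algebra_simps)
qed

lemma quadratic_growth_bound: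
  fixes a b c r :: real
  assumes "0 < a" "0 \<le> b" "0 \<le> c" "0 \<le> r" "a * r\<^sup>2 \<le> b * r + c"
  shows "r \<le> max 1 ((b + c) / a)"
proof (cases "r \<le> 1")
  case False
  then have "a * r * r \<le> (b + c) * r"
    using assms by (simp add: power2_eq_square algebra_simps) (smt (verit) mult_le_cancel_left1)
  then have "a * r \<le> b + c" using False by simp
  then have "r \<le> (b + c) / a" using assms by (simp add: field_simps)
  then show ?thesis by simp
qed simp

lemma power2_powr:
  assumes "0 < (e::real)"
  shows "(e\<^sup>2) powr (a/2) = e powr a"
  using assms by (simp add: powr_powr flip: powr_numeral)

lemma powr_le_one_plus:
  assumes "0 \<le> (t::real)" "0 \<le> a" "a \<le> 1"
  shows "t powr a \<le> 1 + t"
proof (cases "t \<le> 1")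
  case True
  then show ?thesis using assms by (smt (verit) powr_le1)
next
  case False
  then have "t powr a \<le> t powr 1" using assms by (intro powr_mono) auto
  then show ?thesis using False by simp
qed

section \<open>Strong convexity and descent in Hilbert spaces\<close>

lemma norm_midpoint_power2:
  fixes u w :: "'v::real_inner"
  shows "(norm ((1/2) *\<^sub>R (u + w)))\<^sup>2 = ((norm u)\<^sup>2 + (norm w)\<^sup>2)/2 - (norm (u - w))\<^sup>2/4"
  by (simp add: power2_norm_eq_inner inner_add inner_diff inner_commute algebra_simps)
    (simp add: field_simps)

lemma quadratic_midpoint:
  fixes u w a :: "'v::real_inner" and l :: "'v \<Rightarrow>\<^sub>L real" and L \<alpha> :: real
  assumes "0 \<le> L"
  defines "G \<equiv> \<lambda>v. l (v - a) + L/2 * (norm (v - a))\<^sup>2 + \<alpha>/2 * (norm v)\<^sup>2"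
  shows "G ((1/2) *\<^sub>R (u + w)) \<le> (G u + G w)/2 - \<alpha>/8 * (norm (u - w))\<^sup>2"
proof -
  define m where "m = (1/2) *\<^sub>R (u + w)"
  have mid_a: "m - a = (1/2) *\<^sub>R ((u - a) + (w - a))"
    unfolding m_def by (simp add: algebra_simps flip: scaleR_add_left)
  have "l (m - a) = (l (u - a) + l (w - a))/2"
    unfolding mid_a by (simp add: blinfun.scaleR_right blinfun.add_right)
  moreover have "L/2 * (norm (m - a))\<^sup>2 \<le> (L/2 * (norm (u - a))\<^sup>2 + L/2 * (norm (w - a))\<^sup>2)/2"
    using assms mult_nonneg_nonneg[of L "(norm (u - w))\<^sup>2"]
    unfolding mid_a norm_midpoint_power2 by (simp add: algebra_simps)
  moreover have "\<alpha>/2 * (norm m)\<^sup>2 = (\<alpha>/2 * (norm u)\<^sup>2 + \<alpha>/2 * (norm w)\<^sup>2)/2 - \<alpha>/8 * (norm (u - w))\<^sup>2"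
    unfolding m_def norm_midpoint_power2 by (simp add: algebra_simps)
  ultimately show ?thesis unfolding G_def m_def by argo
qed

lemma midpoint_strongly_convex_minimizing_Cauchy:
  fixes Q :: "'v::real_normed_vector \<Rightarrow> real" and s :: "nat \<Rightarrow> 'v"
  assumes mid: "\<And>u w. Q ((1/2) *\<^sub>R (u + w)) \<le> (Q u + Q w)/2 - c * (norm (u - w))\<^sup>2"
    and c: "c > 0" and lower: "\<And>w. m \<le> Q w" and s: "\<And>n. Q (s n) < m + 1/Suc n"
  shows "Cauchy s"
proof (rule metric_CauchyI)
  have key: "c * (norm (s i - s j))\<^sup>2 < 1/Suc i + 1/Suc j" for i j
  proof -
    have "m \<le> (Q (s i) + Q (s j))/2 - c * (norm (s i - s j))\<^sup>2"
      using lower mid order_trans by blast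
    moreover have "0 \<le> 1 / real (Suc i)" "0 \<le> 1 / real (Suc j)" by auto
    ultimately show ?thesis using s[of i] s[of j] by argo
  qed
  fix e :: real assume e: "e > 0"
  obtain N where N: "2 / (c * e\<^sup>2) < real N" using reals_Archimedean2 by blast
  have "dist (s i) (s j) < e" if "i \<ge> N" "j \<ge> N" for i j
  proof -
    have "1/Suc i \<le> 1/Suc N" "1/Suc j \<le> 1/Suc N" using that by (auto simp: field_simps)
    with key[of i j] have "c * (norm (s i - s j))\<^sup>2 < 2 / Suc N" by simp
    also have "2 / Suc N < c * e\<^sup>2"
      using N c e by (simp add: field_simps) (smt (verit) mult_pos_pos zero_less_power)
    finally have "(norm (s i - s j))\<^sup>2 < e\<^sup>2" using c by simp
    then show ?thesis using e by (simp add: dist_norm power_less_imp_less_base)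
  qed
  then show "\<exists>M. \<forall>m\<ge>M. \<forall>n\<ge>M. dist (s m) (s n) < e" by blast
qed

lemma midpoint_strongly_convex_unique_min:
  fixes Q :: "'v::{real_inner,complete_space} \<Rightarrow> real"
  assumes cont: "continuous_on UNIV Q"
    and mid: "\<And>u w. Q ((1/2) *\<^sub>R (u + w)) \<le> (Q u + Q w)/2 - c * (norm (u - w))\<^sup>2"
    and c: "c > 0" and bdd: "\<And>u. m0 \<le> Q u"
  shows "\<exists>!u. \<forall>w. Q u \<le> Q w"
proof -
  define m where "m = Inf (range Q)"
  have bb: "bdd_below (range Q)" using bdd unfolding bdd_below_def by auto
  have lower: "m \<le> Q w" for w unfolding m_def using bb by (simp add: cInf_lower)
  have "\<exists>v. Q v < m + 1/Suc n" for n
    using cInf_lessD[of "range Q" "m + 1/Suc n"] unfolding m_def by auto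
  then obtain s where s: "\<And>n. Q (s n) < m + 1/Suc n" by metis
  obtain u where u: "s \<longlonglongrightarrow> u"
    using midpoint_strongly_convex_minimizing_Cauchy[OF mid c lower s] Cauchy_convergent_iff
      convergent_def by blast
  have "(\<lambda>n. Q (s n)) \<longlonglongrightarrow> Q u"
    using cont u by (metis continuous_on_tendsto_compose UNIV_I eventually_sequentiallyI)
  moreover have "(\<lambda>n. Q (s n)) \<longlonglongrightarrow> m"
  proof (rule tendsto_sandwich[of "\<lambda>n. m" _ _ "\<lambda>n. m + 1/Suc n"])
    show "\<forall>\<^sub>F n in sequentially. Q (s n) \<le> m + 1/Suc n"
      using s less_imp_le by (intro always_eventually) blast
    have "(\<lambda>n. 1 / Suc n) \<longlonglongrightarrow> (0::real)"
      using LIMSEQ_inverse_real_of_nat by (simp add: inverse_eq_divide)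
    then show "(\<lambda>n. m + 1/Suc n) \<longlonglongrightarrow> m"
      using tendsto_add[of "\<lambda>n. m" m sequentially] by fastforce
  qed (use lower in simp_all)
  ultimately have "Q u = m" using LIMSEQ_unique by blast
  then have min: "\<forall>w. Q u \<le> Q w" using lower by simp
  show ?thesis
  proof (rule ex1I[of _ u])
    fix w assume w: "\<forall>x. Q w \<le> Q x"
    have "Q w \<le> Q ((1/2) *\<^sub>R (w + u))" "Q u \<le> Q ((1/2) *\<^sub>R (w + u))" using w min by auto
    then have "c * (norm (w - u))\<^sup>2 \<le> 0" using mid[of w u] by argo
    then show "w = u" using c by (simp add: mult_le_0_iff)
  qed (rule min)
qed

lemma descent_of_lipschitz_derivative:
  fixes F :: "'v::{real_inner,complete_space} \<Rightarrow> real" and F' :: "'v \<Rightarrow> ('v \<Rightarrow>\<^sub>L real)"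
  assumes deriv: "\<And>u. (F has_derivative blinfun_apply (F' u)) (at u)"
    and S: "convex S" "u \<in> S" "w \<in> S"
    and lip: "\<And>x y. x \<in> S \<Longrightarrow> y \<in> S \<Longrightarrow> norm (F' x - F' y) \<le> M * norm (x - y)"
    and M: "0 \<le> M" "M \<le> L"
  shows "descent F F' u L w"
proof -
  define h where "h = w - u"
  define g where "g t = F (u + t *\<^sub>R h) - t * F' u h" for t :: real
  have "(g has_real_derivative (F' (u + t *\<^sub>R h) h - F' u h)) (at t)" for t
  proof -
    have "((\<lambda>t. F (u + t *\<^sub>R h)) has_derivative (\<lambda>s. F' (u + t *\<^sub>R h) (s *\<^sub>R h))) (at t)"
      by (rule has_derivative_compose[OF _ deriv]) (auto intro!: derivative_eq_intros)
    then have "((\<lambda>t. F (u + t *\<^sub>R h)) has_real_derivative F' (u + t *\<^sub>R h) h) (at t)"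
      by (rule has_derivative_imp_has_field_derivative) (simp add: blinfun.scaleR_right)
    then show ?thesis unfolding g_def by (auto intro!: derivative_eq_intros)
  qed
  then obtain z where z: "0 < z" "z < 1" "g 1 - g 0 = F' (u + z *\<^sub>R h) h - F' u h"
    using MVT2[of 0 1 g "\<lambda>t. F' (u + t *\<^sub>R h) h - F' u h"] by auto
  have "u + z *\<^sub>R h = (1 - z) *\<^sub>R u + z *\<^sub>R w" unfolding h_def by (simp add: algebra_simps)
  then have zS: "u + z *\<^sub>R h \<in> S" using S z convexD[of S u w "1 - z" z] by simp
  have "g 1 - g 0 \<le> norm (F' (u + z *\<^sub>R h) - F' u) * norm h"
    using norm_blinfun[of "F' (u + z *\<^sub>R h) - F' u" h] z(3) by (simp add: blinfun.diff_left)
  also have "\<dots> \<le> M * (z * norm h) * norm h"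
    using lip[OF zS S(2)] z by (intro mult_right_mono) auto
  also have "\<dots> \<le> L * norm h * norm h"
    using z M by (intro mult_right_mono mult_mono) (auto intro: mult_left_le_one_le)
  finally have "g 1 - g 0 \<le> L * (norm h)\<^sup>2" by (simp add: power2_eq_square)
  then show ?thesis unfolding descent_def g_def h_def by simp
qed

section \<open>The smoothed penalty \<psi>\<close>

lemma dpsi_nonneg: "0 < p \<Longrightarrow> 0 \<le> dpsi p \<epsilon> t"
  unfolding dpsi_def by auto

lemma dpsi_le:
  assumes "0 < p" "p < 1" "0 < \<epsilon>"
  shows "dpsi p \<epsilon> t \<le> p/2 * \<epsilon> powr (p - 2)"
proof (cases "t < \<epsilon>\<^sup>2")
  case False
  have "t powr ((p - 2)/2) \<le> (\<epsilon>\<^sup>2) powr ((p - 2)/2)"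
    using False assms by (intro powr_mono2') auto
  also have "\<dots> = \<epsilon> powr (p - 2)" using assms by (simp add: power2_powr)
  finally show ?thesis using False assms by (simp add: dpsi_def)
qed (simp add: dpsi_def)

lemma psi_nonneg: "0 \<le> t \<Longrightarrow> 0 < p \<Longrightarrow> p < 1 \<Longrightarrow> 0 \<le> psi p \<epsilon> t"
  unfolding psi_def by auto

lemma psi_le:
  assumes "0 \<le> t" "0 < p" "p < 1" "0 < \<epsilon>"
  shows "psi p \<epsilon> t \<le> \<epsilon> powr p + 1 + t"
proof (cases "t < \<epsilon>\<^sup>2")
  case True
  have "p / 2 * t / \<epsilon> powr (2 - p) \<le> p/2 * (\<epsilon> powr 2 / \<epsilon> powr (2 - p))"
    using True assms by (simp add: divide_right_mono powr_numeral)
  also have "\<epsilon> powr 2 / \<epsilon> powr (2 - p) = \<epsilon> powr p" by (simp only: flip: powr_diff) simp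
  finally have "psi p \<epsilon> t \<le> p/2 * \<epsilon> powr p + (1 - p/2) * \<epsilon> powr p"
    using True by (simp add: psi_def)
  then show ?thesis using assms by (simp add: algebra_simps)
next
  case False
  then have "psi p \<epsilon> t = t powr (p/2)" by (simp add: psi_def)
  then show ?thesis using powr_le_one_plus[of t "p/2"] powr_ge_zero[of \<epsilon> p] assms by linarith
qed

text \<open>The bound is independent of \<epsilon>, which makes the minimisers of (Q_{k,L}) bounded
  uniformly in \<epsilon>.\<close>
lemma dpsi_mult_le:
  assumes "0 \<le> t" "0 < p" "p < 1" "0 < \<epsilon>"
  shows "dpsi p \<epsilon> t * t \<le> p/2 * (1 + t)"
proof (cases "t < \<epsilon>\<^sup>2")
  case True
  have "\<epsilon> powr (p - 2) * t \<le> 1 + t"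
  proof (cases "\<epsilon> \<le> 1")
    case True2: True
    have "\<epsilon> powr (p - 2) * t \<le> \<epsilon> powr (p - 2) * \<epsilon> powr 2"
      using True assms by (simp add: mult_left_mono powr_numeral)
    also have "\<dots> = \<epsilon> powr p" by (simp flip: powr_add)
    also have "\<dots> \<le> 1" using True2 assms by (simp add: powr_le1)
    finally show ?thesis using assms by linarith
  next
    case False
    have "\<epsilon> powr (p - 2) \<le> \<epsilon> powr 0" using False assms by (intro powr_mono) auto
    then have "\<epsilon> powr (p - 2) * t \<le> 1 * t" using assms by (intro mult_right_mono) auto
    then show ?thesis by simp
  qed
  then show ?thesis using True assms by (simp add: dpsi_def)
next
  case False
  then have t: "0 < t" using assms by (smt (verit) zero_less_power)
  have "t powr ((p - 2)/2) * t = t powr ((p - 2)/2 + 1)" using t by (simp add: powr_add)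
  also have "(p - 2)/2 + 1 = p/2" by (simp add: field_simps)
  finally have "dpsi p \<epsilon> t * t = p/2 * t powr (p/2)" using False by (simp add: dpsi_def)
  also have "\<dots> \<le> p/2 * (1 + t)" using powr_le_one_plus[of t "p/2"] assms by simp
  finally show ?thesis .
qed

section \<open>Weighted quadratic forms through the embedding into L2\<close>

definition quad_form :: "'a::euclidean_space set \<Rightarrow> ('v \<Rightarrow> 'a \<Rightarrow> real) \<Rightarrow> ('a \<Rightarrow> real) \<Rightarrow> 'v \<Rightarrow> real"
  where "quad_form \<Omega> \<iota> d u = (\<integral>x. d x * (\<iota> u x)\<^sup>2 \<partial>lebesgue_on \<Omega>)"

context
  fixes \<Omega> :: "'a::euclidean_space set" and \<iota> :: "'v::{real_inner,complete_space} \<Rightarrow> 'a \<Rightarrow> real"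
  assumes emb: "compact_dense_L2_embedding \<Omega> \<iota>"
begin

lemma embedding_measurable: "\<iota> u \<in> borel_measurable (lebesgue_on \<Omega>)"
  using emb unfolding compact_dense_L2_embedding_def L2fun_def by blast

lemma embedding_square_integrable: "integrable (lebesgue_on \<Omega>) (\<lambda>x. (\<iota> u x)\<^sup>2)"
  using emb unfolding compact_dense_L2_embedding_def L2fun_def by blast

lemma embedding_add_AE: "AE x in lebesgue_on \<Omega>. \<iota> (u + w) x = \<iota> u x + \<iota> w x"
  using emb unfolding compact_dense_L2_embedding_def by blast

lemma embedding_scaleR_AE: "AE x in lebesgue_on \<Omega>. \<iota> (c *\<^sub>R u) x = c * \<iota> u x"
  using emb unfolding compact_dense_L2_embedding_def by blast

lemma embedding_square_integral_le: "\<exists>K\<ge>0. \<forall>u. (\<integral>x. (\<iota> u x)\<^sup>2 \<partial>lebesgue_on \<Omega>) \<le> K * (norm u)\<^sup>2"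
proof -
  obtain K where K: "\<And>u. L2norm \<Omega> (\<iota> u) \<le> K * norm u"
    using emb unfolding compact_dense_L2_embedding_def by blast
  have "(\<integral>x. (\<iota> u x)\<^sup>2 \<partial>lebesgue_on \<Omega>) \<le> (max K 0)\<^sup>2 * (norm u)\<^sup>2" for u
  proof -
    have "0 \<le> (\<integral>x. (\<iota> u x)\<^sup>2 \<partial>lebesgue_on \<Omega>)" by (intro integral_nonneg_AE) auto
    moreover have "L2norm \<Omega> (\<iota> u) \<le> max K 0 * norm u"
      using K[of u] by (smt (verit) mult_right_mono norm_ge_zero)
    then have "(L2norm \<Omega> (\<iota> u))\<^sup>2 \<le> (max K 0 * norm u)\<^sup>2"
      by (intro power_mono) (auto simp: L2norm_def)
    ultimately show ?thesis unfolding L2norm_def by (simp add: power_mult_distrib)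
  qed
  then show ?thesis by (intro exI[of _ "(max K 0)\<^sup>2"]) auto
qed

context
  fixes d :: "'a \<Rightarrow> real" and D :: real
  assumes d_measurable: "d \<in> borel_measurable (lebesgue_on \<Omega>)"
    and d_nonneg: "\<And>x. 0 \<le> d x" and d_le: "\<And>x. d x \<le> D"
begin

lemma quad_form_integrable: "integrable (lebesgue_on \<Omega>) (\<lambda>x. d x * (\<iota> u x)\<^sup>2)"
proof (rule Bochner_Integration.integrable_bound)
  show "integrable (lebesgue_on \<Omega>) (\<lambda>x. D * (\<iota> u x)\<^sup>2)"
    using embedding_square_integrable by simp
  show "(\<lambda>x. d x * (\<iota> u x)\<^sup>2) \<in> borel_measurable (lebesgue_on \<Omega>)"
    using d_measurable embedding_measurable by measurable
  have "\<bar>d x\<bar> \<le> \<bar>D\<bar>" for x using d_nonneg[of x] d_le[of x] by linarith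
  then show "AE x in lebesgue_on \<Omega>. norm (d x * (\<iota> u x)\<^sup>2) \<le> norm (D * (\<iota> u x)\<^sup>2)"
    by (simp add: abs_mult mult_right_mono)
qed

lemma quad_form_nonneg: "0 \<le> quad_form \<Omega> \<iota> d u"
  unfolding quad_form_def using d_nonneg by (intro integral_nonneg_AE) auto

lemma quad_form_midpoint:
  "quad_form \<Omega> \<iota> d ((1/2) *\<^sub>R (u + w)) \<le> (quad_form \<Omega> \<iota> d u + quad_form \<Omega> \<iota> d w)/2"
proof -
  have "quad_form \<Omega> \<iota> d ((1/2) *\<^sub>R (u + w))
      \<le> (\<integral>x. (d x * (\<iota> u x)\<^sup>2 + d x * (\<iota> w x)\<^sup>2) / 2 \<partial>lebesgue_on \<Omega>)"
    unfolding quad_form_def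
  proof (rule integral_mono_AE)
    have "AE x in lebesgue_on \<Omega>. \<iota> ((1/2) *\<^sub>R (u + w)) x = (1/2) * (\<iota> u x + \<iota> w x)"
      using embedding_add_AE[of u w] embedding_scaleR_AE[of "1/2" "u + w"] by eventually_elim simp
    then show "AE x in lebesgue_on \<Omega>.
        d x * (\<iota> ((1/2) *\<^sub>R (u + w)) x)\<^sup>2 \<le> (d x * (\<iota> u x)\<^sup>2 + d x * (\<iota> w x)\<^sup>2) / 2"
    proof eventually_elim
      case (elim x)
      have "((1/2) * (\<iota> u x + \<iota> w x))\<^sup>2 \<le> ((\<iota> u x)\<^sup>2 + (\<iota> w x)\<^sup>2)/2"
        using sum_squares_ge_zero[of "\<iota> u x - \<iota> w x" 0] by (simp add: power2_eq_square algebra_simps)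
      then have "d x * ((1/2) * (\<iota> u x + \<iota> w x))\<^sup>2 \<le> d x * (((\<iota> u x)\<^sup>2 + (\<iota> w x)\<^sup>2)/2)"
        by (intro mult_left_mono d_nonneg)
      then show ?case using elim by (simp add: algebra_simps)
    qed
  qed (use quad_form_integrable in auto)
  also have "\<dots> = (quad_form \<Omega> \<iota> d u + quad_form \<Omega> \<iota> d w)/2"
    unfolding quad_form_def using quad_form_integrable by simp
  finally show ?thesis .
qed

lemma quad_form_diff_le:
  assumes \<eta>: "\<eta> > 0"
  shows "\<bar>quad_form \<Omega> \<iota> d v - quad_form \<Omega> \<iota> d u\<bar>
    \<le> \<eta> * quad_form \<Omega> \<iota> d u + (1 + 1/\<eta>) * D * (\<integral>x. (\<iota> (v - u) x)\<^sup>2 \<partial>lebesgue_on \<Omega>)"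
proof -
  have "quad_form \<Omega> \<iota> d v - quad_form \<Omega> \<iota> d u
      = (\<integral>x. d x * (\<iota> v x)\<^sup>2 - d x * (\<iota> u x)\<^sup>2 \<partial>lebesgue_on \<Omega>)"
    unfolding quad_form_def using quad_form_integrable by simp
  also have "\<bar>\<dots>\<bar> \<le> (\<integral>x. \<bar>d x * (\<iota> v x)\<^sup>2 - d x * (\<iota> u x)\<^sup>2\<bar> \<partial>lebesgue_on \<Omega>)"
    using integral_norm_bound[of "lebesgue_on \<Omega>" "\<lambda>x. d x * (\<iota> v x)\<^sup>2 - d x * (\<iota> u x)\<^sup>2"] by simp
  also have "\<dots> \<le> (\<integral>x. \<eta> * (d x * (\<iota> u x)\<^sup>2) + (1 + 1/\<eta>) * D * (\<iota> (v - u) x)\<^sup>2 \<partial>lebesgue_on \<Omega>)"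
  proof (rule integral_mono_AE)
    have "AE x in lebesgue_on \<Omega>. \<iota> v x = \<iota> u x + \<iota> (v - u) x"
      using embedding_add_AE[of u "v - u"] by simp
    then show "AE x in lebesgue_on \<Omega>. \<bar>d x * (\<iota> v x)\<^sup>2 - d x * (\<iota> u x)\<^sup>2\<bar>
        \<le> \<eta> * (d x * (\<iota> u x)\<^sup>2) + (1 + 1/\<eta>) * D * (\<iota> (v - u) x)\<^sup>2"
    proof eventually_elim
      case (elim x)
      have "\<bar>d x * (\<iota> v x)\<^sup>2 - d x * (\<iota> u x)\<^sup>2\<bar> = d x * \<bar>(\<iota> u x + \<iota> (v - u) x)\<^sup>2 - (\<iota> u x)\<^sup>2\<bar>"
        using elim d_nonneg[of x] by (simp add: abs_mult right_diff_distrib[symmetric])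
      also have "\<dots> \<le> d x * (\<eta> * (\<iota> u x)\<^sup>2 + (1 + 1/\<eta>) * (\<iota> (v - u) x)\<^sup>2)"
        by (intro mult_left_mono abs_power2_add_diff_le \<eta> d_nonneg)
      also have "\<dots> \<le> \<eta> * (d x * (\<iota> u x)\<^sup>2) + (1 + 1/\<eta>) * D * (\<iota> (v - u) x)\<^sup>2"
        using \<eta> d_le[of x] mult_right_mono[of "d x" D "(1 + 1/\<eta>) * (\<iota> (v - u) x)\<^sup>2"]
        by (simp add: algebra_simps)
      finally show ?case .
    qed
  qed (use quad_form_integrable embedding_square_integrable in auto)
  also have "\<dots> = \<eta> * quad_form \<Omega> \<iota> d u + (1 + 1/\<eta>) * D * (\<integral>x. (\<iota> (v - u) x)\<^sup>2 \<partial>lebesgue_on \<Omega>)"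
    unfolding quad_form_def using quad_form_integrable embedding_square_integrable by simp
  finally show ?thesis .
qed

lemma quad_form_continuous: "continuous_on UNIV (quad_form \<Omega> \<iota> d)"
proof -
  obtain K where K: "K \<ge> 0" "\<And>u. (\<integral>x. (\<iota> u x)\<^sup>2 \<partial>lebesgue_on \<Omega>) \<le> K * (norm u)\<^sup>2"
    using embedding_square_integral_le by blast
  have D: "0 \<le> D" using d_nonneg d_le order_trans by blast
  have "isCont (quad_form \<Omega> \<iota> d) u" for u
  proof -
    let ?q = "quad_form \<Omega> \<iota> d"
    have bound: "norm (?q v - ?q u) \<le> norm (v - u) * (?q u + D * K * (1 + norm (v - u)))"
      if "v \<noteq> u" for v
    proof -
      define r where "r = norm (v - u)"
      have r: "r > 0" using that by (simp add: r_def)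
      have "\<bar>?q v - ?q u\<bar> \<le> r * ?q u + (1 + 1/r) * D * (\<integral>x. (\<iota> (v - u) x)\<^sup>2 \<partial>lebesgue_on \<Omega>)"
        by (rule quad_form_diff_le[OF r])
      also have "\<dots> \<le> r * ?q u + (1 + 1/r) * D * (K * r\<^sup>2)"
        using K(2)[of "v - u"] D r unfolding r_def by (intro add_left_mono mult_left_mono) auto
      also have "\<dots> = r * (?q u + D * K * (1 + r))"
        using r by (simp add: field_simps power2_eq_square)
      finally show ?thesis by (simp add: r_def)
    qed
    have "((\<lambda>v. norm (v - u)) \<longlongrightarrow> 0) (at u)"
      using tendsto_norm_zero[OF LIM_zero[OF tendsto_ident_at]] .
    then have "((\<lambda>v. norm (v - u) * (?q u + D * K * (1 + norm (v - u)))) \<longlongrightarrow> 0) (at u)"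
      by (auto intro!: tendsto_mult_left_zero tendsto_eq_intros)
    then have "((\<lambda>v. ?q v - ?q u) \<longlongrightarrow> 0) (at u)"
      by (rule Lim_null_comparison[rotated]) (use bound in \<open>auto simp: eventually_at_filter\<close>)
    then show ?thesis unfolding isCont_def by (simp add: LIM_zero_iff)
  qed
  then show ?thesis by (simp add: continuous_at_imp_continuous_on)
qed

end

end

section \<open>The subproblem (Q_{k,L})\<close>

definition dpsi_weight :: "real \<Rightarrow> real \<Rightarrow> ('v \<Rightarrow> 'a \<Rightarrow> real) \<Rightarrow> 'v \<Rightarrow> 'a \<Rightarrow> real"
  where "dpsi_weight p \<epsilon> \<iota> uk x = dpsi p \<epsilon> ((\<iota> uk x)\<^sup>2)"

definition penalty_offset ::
    "'a::euclidean_space set \<Rightarrow> ('v \<Rightarrow> 'a \<Rightarrow> real) \<Rightarrow> real \<Rightarrow> real \<Rightarrow> 'v \<Rightarrow> real"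
  where "penalty_offset \<Omega> \<iota> p \<epsilon> uk =
    (\<integral>x. psi p \<epsilon> ((\<iota> uk x)\<^sup>2) - dpsi p \<epsilon> ((\<iota> uk x)\<^sup>2) * (\<iota> uk x)\<^sup>2 \<partial>lebesgue_on \<Omega>)"

context
  fixes \<Omega> :: "'a::euclidean_space set" and \<iota> :: "'v::{real_inner,complete_space} \<Rightarrow> 'a \<Rightarrow> real"
    and p :: real
  assumes emb: "compact_dense_L2_embedding \<Omega> \<iota>"
    and fm: "finite_measure (lebesgue_on \<Omega>)"
    and p: "0 < p" "p < 1"
begin

lemma dpsi_weight_measurable: "dpsi_weight p \<epsilon> \<iota> uk \<in> borel_measurable (lebesgue_on \<Omega>)"
proof -
  have "dpsi p \<epsilon> \<in> borel_measurable borel" unfolding dpsi_def[abs_def] by measurable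
  then show ?thesis
    unfolding dpsi_weight_def[abs_def] using embedding_measurable[OF emb] by measurable
qed

lemma dpsi_weight_nonneg: "0 \<le> dpsi_weight p \<epsilon> \<iota> uk x"
  unfolding dpsi_weight_def using dpsi_nonneg p by simp

lemma dpsi_weight_le: "0 < \<epsilon> \<Longrightarrow> dpsi_weight p \<epsilon> \<iota> uk x \<le> p/2 * \<epsilon> powr (p - 2)"
  unfolding dpsi_weight_def using dpsi_le p by simp

lemma penalty_offset_integrable:
  assumes \<epsilon>: "0 < \<epsilon>"
  shows "integrable (lebesgue_on \<Omega>)
    (\<lambda>x. psi p \<epsilon> ((\<iota> uk x)\<^sup>2) - dpsi p \<epsilon> ((\<iota> uk x)\<^sup>2) * (\<iota> uk x)\<^sup>2)"
proof (rule Bochner_Integration.integrable_bound)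
  show "integrable (lebesgue_on \<Omega>) (\<lambda>x. \<epsilon> powr p + 2 + 2 * (\<iota> uk x)\<^sup>2)"
    using embedding_square_integrable[OF emb] finite_measure.integrable_const[OF fm]
    by (intro Bochner_Integration.integrable_add integrable_mult_right) auto
  have "psi p \<epsilon> \<in> borel_measurable borel" "dpsi p \<epsilon> \<in> borel_measurable borel"
    unfolding psi_def[abs_def] dpsi_def[abs_def] by measurable
  then show "(\<lambda>x. psi p \<epsilon> ((\<iota> uk x)\<^sup>2) - dpsi p \<epsilon> ((\<iota> uk x)\<^sup>2) * (\<iota> uk x)\<^sup>2)
      \<in> borel_measurable (lebesgue_on \<Omega>)"
    using embedding_measurable[OF emb] by measurable
  show "AE x in lebesgue_on \<Omega>. norm (psi p \<epsilon> ((\<iota> uk x)\<^sup>2) - dpsi p \<epsilon> ((\<iota> uk x)\<^sup>2) * (\<iota> uk x)\<^sup>2)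
      \<le> norm (\<epsilon> powr p + 2 + 2 * (\<iota> uk x)\<^sup>2)"
  proof (intro AE_I2)
    fix x
    define t where "t = (\<iota> uk x)\<^sup>2"
    have "0 \<le> t" by (simp add: t_def)
    then have "0 \<le> psi p \<epsilon> t" "psi p \<epsilon> t \<le> \<epsilon> powr p + 1 + t"
      "0 \<le> dpsi p \<epsilon> t * t" "dpsi p \<epsilon> t * t \<le> 1 + t"
      using psi_nonneg psi_le dpsi_nonneg dpsi_mult_le[of t p \<epsilon>] p \<epsilon>
        mult_left_le_one_le[of "1 + t" "p/2"] by auto
    then show "norm (psi p \<epsilon> t - dpsi p \<epsilon> t * t) \<le> norm (\<epsilon> powr p + 2 + 2 * t)"
      using powr_ge_zero[of \<epsilon> p] by simp
  qed
qed

lemma Qobj_eq: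
  assumes \<epsilon>: "0 < \<epsilon>"
  shows "Qobj \<Omega> \<iota> F F' \<alpha> \<beta> p \<epsilon> uk L u = F uk + F' uk (u - uk) + L/2 * (norm (u - uk))\<^sup>2
    + \<alpha>/2 * (norm u)\<^sup>2 + \<beta> * (penalty_offset \<Omega> \<iota> p \<epsilon> uk + quad_form \<Omega> \<iota> (dpsi_weight p \<epsilon> \<iota> uk) u)"
proof -
  have "(\<integral>x. psi p \<epsilon> ((\<iota> uk x)\<^sup>2) + dpsi p \<epsilon> ((\<iota> uk x)\<^sup>2) * ((\<iota> u x)\<^sup>2 - (\<iota> uk x)\<^sup>2) \<partial>lebesgue_on \<Omega>)
    = (\<integral>x. (psi p \<epsilon> ((\<iota> uk x)\<^sup>2) - dpsi p \<epsilon> ((\<iota> uk x)\<^sup>2) * (\<iota> uk x)\<^sup>2)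
          + dpsi_weight p \<epsilon> \<iota> uk x * (\<iota> u x)\<^sup>2 \<partial>lebesgue_on \<Omega>)"
    unfolding dpsi_weight_def by (simp add: algebra_simps)
  also have "\<dots> = penalty_offset \<Omega> \<iota> p \<epsilon> uk + quad_form \<Omega> \<iota> (dpsi_weight p \<epsilon> \<iota> uk) u"
    unfolding penalty_offset_def quad_form_def
    using penalty_offset_integrable[OF \<epsilon>] quad_form_integrable[OF emb dpsi_weight_measurable
        dpsi_weight_nonneg dpsi_weight_le[OF \<epsilon>]]
    by simp
  finally show ?thesis unfolding Qobj_def by simp
qed

lemma quad_form_dpsi_weight_le:
  assumes \<epsilon>: "0 < \<epsilon>"
  shows "quad_form \<Omega> \<iota> (dpsi_weight p \<epsilon> \<iota> uk) uk
    \<le> p/2 * (measure (lebesgue_on \<Omega>) (space (lebesgue_on \<Omega>)) + (\<integral>x. (\<iota> uk x)\<^sup>2 \<partial>lebesgue_on \<Omega>))"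
proof -
  have sq: "integrable (lebesgue_on \<Omega>) (\<lambda>x. (\<iota> uk x)\<^sup>2)"
    by (rule embedding_square_integrable[OF emb])
  have "quad_form \<Omega> \<iota> (dpsi_weight p \<epsilon> \<iota> uk) uk \<le> (\<integral>x. p/2 * (1 + (\<iota> uk x)\<^sup>2) \<partial>lebesgue_on \<Omega>)"
    unfolding quad_form_def
  proof (rule integral_mono)
    show "integrable (lebesgue_on \<Omega>) (\<lambda>x. p/2 * (1 + (\<iota> uk x)\<^sup>2))"
      using sq finite_measure.integrable_const[OF fm]
      by (intro integrable_mult_right Bochner_Integration.integrable_add) auto
    show "dpsi_weight p \<epsilon> \<iota> uk x * (\<iota> uk x)\<^sup>2 \<le> p/2 * (1 + (\<iota> uk x)\<^sup>2)" for x
      unfolding dpsi_weight_def using dpsi_mult_le p \<epsilon> by simp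
  qed (rule quad_form_integrable[OF emb dpsi_weight_measurable dpsi_weight_nonneg
        dpsi_weight_le[OF \<epsilon>]])
  also have "\<dots> = p/2 * (measure (lebesgue_on \<Omega>) (space (lebesgue_on \<Omega>))
      + (\<integral>x. (\<iota> uk x)\<^sup>2 \<partial>lebesgue_on \<Omega>))"
    using Bochner_Integration.integral_add[OF finite_measure.integrable_const[OF fm] sq] by simp
  finally show ?thesis .
qed

lemma quad_form_dpsi_weight_uniformly_bounded:
  "\<exists>B. \<forall>\<epsilon> uk. 0 < \<epsilon> \<longrightarrow> norm uk \<le> X \<longrightarrow> quad_form \<Omega> \<iota> (dpsi_weight p \<epsilon> \<iota> uk) uk \<le> B"
proof -
  obtain K where K: "K \<ge> 0" "\<And>u. (\<integral>x. (\<iota> u x)\<^sup>2 \<partial>lebesgue_on \<Omega>) \<le> K * (norm u)\<^sup>2"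
    using embedding_square_integral_le[OF emb] by blast
  have "quad_form \<Omega> \<iota> (dpsi_weight p \<epsilon> \<iota> uk) uk
      \<le> p/2 * (measure (lebesgue_on \<Omega>) (space (lebesgue_on \<Omega>)) + K * X\<^sup>2)"
    if \<epsilon>: "0 < \<epsilon>" and X: "norm uk \<le> X" for \<epsilon> uk
  proof -
    have "K * (norm uk)\<^sup>2 \<le> K * X\<^sup>2" using K(1) X by (intro mult_left_mono power_mono) auto
    then have "p/2 * (measure (lebesgue_on \<Omega>) (space (lebesgue_on \<Omega>)) + (\<integral>x. (\<iota> uk x)\<^sup>2 \<partial>lebesgue_on \<Omega>))
        \<le> p/2 * (measure (lebesgue_on \<Omega>) (space (lebesgue_on \<Omega>)) + K * X\<^sup>2)"
      using K(2)[of uk] p by (intro mult_left_mono) auto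
    then show ?thesis using quad_form_dpsi_weight_le[OF \<epsilon>, of uk] by linarith
  qed
  then show ?thesis by blast
qed

lemma Qobj_unique_min:
  assumes \<epsilon>: "0 < \<epsilon>" and \<alpha>: "0 < \<alpha>" and \<beta>: "0 \<le> \<beta>" and L: "0 \<le> L"
  shows "\<exists>!u. is_Qmin \<Omega> \<iota> F F' \<alpha> \<beta> p \<epsilon> uk L u"
proof -
  let ?q = "quad_form \<Omega> \<iota> (dpsi_weight p \<epsilon> \<iota> uk)"
  let ?G = "\<lambda>v. F' uk (v - uk) + L/2 * (norm (v - uk))\<^sup>2 + \<alpha>/2 * (norm v)\<^sup>2"
  define C where "C = F uk + \<beta> * penalty_offset \<Omega> \<iota> p \<epsilon> uk"
  define Q where "Q = Qobj \<Omega> \<iota> F F' \<alpha> \<beta> p \<epsilon> uk L"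
  have Q: "Q = (\<lambda>v. C + ?G v + \<beta> * ?q v)"
    unfolding Q_def C_def by (rule ext) (simp add: Qobj_eq[OF \<epsilon>] algebra_simps)
  note weight = dpsi_weight_measurable dpsi_weight_nonneg dpsi_weight_le[OF \<epsilon>]
  have "continuous_on UNIV Q"
    unfolding Q by (intro continuous_intros quad_form_continuous[OF emb weight])
  moreover have "Q ((1/2) *\<^sub>R (u + w)) \<le> (Q u + Q w)/2 - \<alpha>/8 * (norm (u - w))\<^sup>2" for u w
  proof -
    have "\<beta> * ?q ((1/2) *\<^sub>R (u + w)) \<le> \<beta> * ((?q u + ?q w)/2)"
      using quad_form_midpoint[OF emb weight] \<beta> by (rule mult_left_mono)
    then show ?thesis
      using quadratic_midpoint[where l = "F' uk" and a = uk and \<alpha> = \<alpha> and u = u and w = w, OF L] unfolding Q by argo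
  qed
  moreover have "\<alpha>/8 > 0" using \<alpha> by simp
  moreover have "C - norm (F' uk) * norm uk - (norm (F' uk))\<^sup>2 / (2 * \<alpha>) \<le> Q u" for u
  proof -
    define N where "N = norm (F' uk)"
    have "- (N * norm (u - uk)) \<le> F' uk (u - uk)"
      using norm_blinfun[of "F' uk" "u - uk"] unfolding N_def by simp
    moreover have "N * norm (u - uk) \<le> N * norm u + N * norm uk"
      using norm_triangle_ineq4[of u uk] unfolding N_def
      by (simp flip: distrib_left add: mult_left_mono)
    moreover have "0 \<le> (\<alpha> * norm u - N)\<^sup>2 / (2 * \<alpha>)" using \<alpha> by simp
    then have "N * norm u \<le> \<alpha>/2 * (norm u)\<^sup>2 + N\<^sup>2 / (2 * \<alpha>)"
      using \<alpha> by (simp add: power2_eq_square field_simps)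
    moreover have "0 \<le> L/2 * (norm (u - uk))\<^sup>2" "0 \<le> \<beta> * ?q u"
      using L \<beta> quad_form_nonneg[OF emb weight] by auto
    ultimately show ?thesis unfolding Q N_def by argo
  qed
  ultimately have "\<exists>!u. \<forall>w. Q u \<le> Q w" by (rule midpoint_strongly_convex_unique_min)
  then show ?thesis unfolding is_Qmin_def Q_def .
qed

lemma Qmin_norm_bound:
  assumes \<alpha>: "0 < \<alpha>" and \<beta>: "0 \<le> \<beta>"
  shows "\<exists>R. \<forall>\<epsilon> uk L w. 0 < \<epsilon> \<longrightarrow> 0 \<le> L \<longrightarrow> norm (F' uk) \<le> N \<longrightarrow> norm uk \<le> X \<longrightarrow>
    is_Qmin \<Omega> \<iota> F F' \<alpha> \<beta> p \<epsilon> uk L w \<longrightarrow> norm w \<le> R"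
proof -
  obtain B where B: "\<And>\<epsilon> uk. 0 < \<epsilon> \<Longrightarrow> norm uk \<le> X \<Longrightarrow>
      quad_form \<Omega> \<iota> (dpsi_weight p \<epsilon> \<iota> uk) uk \<le> B"
    using quad_form_dpsi_weight_uniformly_bounded by blast
  define A where "A = N * X + \<alpha>/2 * X\<^sup>2 + \<beta> * B"
  have "norm w \<le> max 1 ((N + A) / (\<alpha>/2))"
    if \<epsilon>: "0 < \<epsilon>" and L: "0 \<le> L" and N: "norm (F' uk) \<le> N" and X: "norm uk \<le> X"
      and min: "is_Qmin \<Omega> \<iota> F F' \<alpha> \<beta> p \<epsilon> uk L w" for \<epsilon> uk L w
  proof -
    let ?q = "quad_form \<Omega> \<iota> (dpsi_weight p \<epsilon> \<iota> uk)"
    have N0: "0 \<le> N" and X0: "0 \<le> X" using N X norm_ge_zero order_trans by blast+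
    have "Qobj \<Omega> \<iota> F F' \<alpha> \<beta> p \<epsilon> uk L w \<le> Qobj \<Omega> \<iota> F F' \<alpha> \<beta> p \<epsilon> uk L uk"
      using min unfolding is_Qmin_def by blast
    then have cmp: "F' uk (w - uk) + L/2 * (norm (w - uk))\<^sup>2 + \<alpha>/2 * (norm w)\<^sup>2 + \<beta> * ?q w
        \<le> \<alpha>/2 * (norm uk)\<^sup>2 + \<beta> * ?q uk"
      unfolding Qobj_eq[OF \<epsilon>] by (simp add: algebra_simps)
    have q_nonneg: "0 \<le> ?q v" for v
      by (rule quad_form_nonneg[OF emb dpsi_weight_measurable dpsi_weight_nonneg dpsi_weight_le[OF \<epsilon>]])
    have "\<beta> * (?q uk - ?q w) \<le> \<beta> * B"
      using \<beta> B[OF \<epsilon> X] q_nonneg[of w] by (intro mult_left_mono) auto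
    moreover have "- (N * (norm w + X)) \<le> F' uk (w - uk)"
    proof -
      have "\<bar>F' uk (w - uk)\<bar> \<le> norm (F' uk) * norm (w - uk)"
        using norm_blinfun[of "F' uk" "w - uk"] by simp
      also have "\<dots> \<le> N * (norm w + X)"
        using N X N0 norm_triangle_ineq4[of w uk] by (intro mult_mono) auto
      finally show ?thesis by linarith
    qed
    moreover have "\<alpha>/2 * (norm uk)\<^sup>2 \<le> \<alpha>/2 * X\<^sup>2"
      using \<alpha> X by (intro mult_left_mono power_mono) auto
    moreover have "0 \<le> L/2 * (norm (w - uk))\<^sup>2" using L by simp
    ultimately have "\<alpha>/2 * (norm w)\<^sup>2 \<le> N * norm w + A"
      using cmp unfolding A_def by (simp add: algebra_simps)
    moreover have "0 \<le> A"
      unfolding A_def using N0 X0 \<alpha> \<beta> B[OF \<epsilon> X] q_nonneg[of uk] by simp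
    ultimately show ?thesis using quadratic_growth_bound \<alpha> N0 by simp
  qed
  then show ?thesis by blast
qed

end

section \<open>Admissibility of the step sizes L_k\<close>

lemma assumption_I_F_lipschitz_cball:
  assumes "assumption_I_F F F'"
  shows "\<exists>M\<ge>0. \<forall>x\<in>cball 0 R. \<forall>y\<in>cball 0 R. norm (F' x - F' y) \<le> M * norm (x - y)"
proof -
  obtain M where M: "\<And>x y. x \<in> cball 0 R \<Longrightarrow> y \<in> cball 0 R \<Longrightarrow> norm (F' x - F' y) \<le> M * norm (x - y)"
    using assms unfolding assumption_I_F_def by (meson bounded_cball)
  have "norm (F' x - F' y) \<le> max M 0 * norm (x - y)" if "x \<in> cball 0 R" "y \<in> cball 0 R" for x y
    using M[OF that] mult_right_mono[of M "max M 0" "norm (x - y)"] by simp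
  then show ?thesis by (intro exI[of _ "max M 0"]) auto
qed

lemma assumption_I_F_bounded_image:
  assumes F: "assumption_I_F F F'" and B: "bounded B"
  shows "bounded (F' ` B)"
proof -
  obtain R where R: "R > 0" "\<And>u. u \<in> B \<Longrightarrow> norm u \<le> R" using B unfolding bounded_pos by blast
  obtain M where M: "M \<ge> 0" "\<forall>x\<in>cball 0 R. \<forall>y\<in>cball 0 R. norm (F' x - F' y) \<le> M * norm (x - y)"
    using assumption_I_F_lipschitz_cball[OF F] by blast
  have "norm (F' u) \<le> norm (F' 0) + M * R" if "u \<in> B" for u
  proof -
    have "u \<in> cball 0 R" "0 \<in> cball 0 R" using R that by auto
    then have "norm (F' u - F' 0) \<le> M * norm (u - 0)" using M(2) by blast
    also have "\<dots> \<le> M * R" using M(1) R(2)[OF that] by (simp add: mult_left_mono)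
    finally have "norm (F' u - F' 0) \<le> M * R" .
    then show ?thesis using norm_triangle_ineq2[of "F' u" "F' 0"] by linarith
  qed
  then show ?thesis unfolding bounded_iff by blast
qed

lemma Lset_step_down:
  assumes "L \<in> Lset Ltil \<gamma>" "Ltil < L"
  shows "\<exists>L'\<in>Lset Ltil \<gamma>. L = \<gamma> * L'"
proof (cases "L = 0")
  case False
  then obtain l where l: "L = Ltil * \<gamma> ^ l" using assms(1) unfolding Lset_def by auto
  with assms(2) have "l \<noteq> 0" by (auto intro: Nat.gr0I)
  then obtain j where "l = Suc j" using not0_implies_Suc by blast
  with l have "L = \<gamma> * (Ltil * \<gamma> ^ j)" by (simp add: mult.left_commute)
  then show ?thesis unfolding Lset_def by blast
qed (auto simp: Lset_def)

context
  fixes \<Omega> :: "'a::euclidean_space set" and \<iota> :: "'v::{real_inner,complete_space} \<Rightarrow> 'a \<Rightarrow> real"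
    and F :: "'v \<Rightarrow> real" and F' :: "'v \<Rightarrow> ('v \<Rightarrow>\<^sub>L real)" and \<alpha> \<beta> p :: real
  assumes emb: "compact_dense_L2_embedding \<Omega> \<iota>"
    and fm: "finite_measure (lebesgue_on \<Omega>)"
    and F: "assumption_I_F F F'"
    and \<alpha>: "0 < \<alpha>" and \<beta>: "0 < \<beta>" and p: "0 < p" "p < 1"
begin

lemma descent_for_large_L:
  "\<exists>M\<ge>0. \<forall>\<epsilon> uk L w. 0 < \<epsilon> \<longrightarrow> M \<le> L \<longrightarrow> norm (F' uk) \<le> N \<longrightarrow> norm uk \<le> X \<longrightarrow>
    is_Qmin \<Omega> \<iota> F F' \<alpha> \<beta> p \<epsilon> uk L w \<longrightarrow> descent F F' uk L w"
proof -
  obtain R where R: "\<forall>\<epsilon> uk L w. 0 < \<epsilon> \<longrightarrow> 0 \<le> L \<longrightarrow> norm (F' uk) \<le> N \<longrightarrow> norm uk \<le> X \<longrightarrow>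
      is_Qmin \<Omega> \<iota> F F' \<alpha> \<beta> p \<epsilon> uk L w \<longrightarrow> norm w \<le> R"
    using Qmin_norm_bound[OF emb fm p \<alpha>] \<beta> by fastforce
  obtain M where M: "M \<ge> 0" "\<forall>x\<in>cball 0 (max X R). \<forall>y\<in>cball 0 (max X R).
      norm (F' x - F' y) \<le> M * norm (x - y)"
    using assumption_I_F_lipschitz_cball[OF F] by blast
  have "descent F F' uk L w"
    if "0 < \<epsilon>" "M \<le> L" "norm (F' uk) \<le> N" "norm uk \<le> X" "is_Qmin \<Omega> \<iota> F F' \<alpha> \<beta> p \<epsilon> uk L w"
    for \<epsilon> uk L w
  proof (rule descent_of_lipschitz_derivative[where S = "cball 0 (max X R)"])
    show "(F has_derivative blinfun_apply (F' u)) (at u)" for u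
      using F unfolding assumption_I_F_def standing_F_def by blast
    have "0 \<le> L" using that(2) M(1) by linarith
    then have "norm w \<le> R" using R that by blast
    then show "uk \<in> cball 0 (max X R)" "w \<in> cball 0 (max X R)" using that by auto
    show "M \<le> L" by (rule that(2))
  qed (use M in auto)
  then show ?thesis using M(1) by blast
qed

lemma exists_descent_L:
  assumes \<epsilon>: "0 < \<epsilon>" and \<gamma>: "1 < \<gamma>" and Ltil: "0 < Ltil"
  shows "\<exists>L\<in>Lset Ltil \<gamma>. (\<exists>!u. is_Qmin \<Omega> \<iota> F F' \<alpha> \<beta> p \<epsilon> uk L u) \<and>
    (\<forall>u. is_Qmin \<Omega> \<iota> F F' \<alpha> \<beta> p \<epsilon> uk L u \<longrightarrow> descent F F' uk L u)"
proof -
  obtain M where M: "M \<ge> 0" and desc: "\<forall>\<epsilon> uk' L w. 0 < \<epsilon> \<longrightarrow> M \<le> L \<longrightarrow>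
      norm (F' uk') \<le> norm (F' uk) \<longrightarrow> norm uk' \<le> norm uk \<longrightarrow>
      is_Qmin \<Omega> \<iota> F F' \<alpha> \<beta> p \<epsilon> uk' L w \<longrightarrow> descent F F' uk' L w"
    using descent_for_large_L by blast
  obtain l where "M / Ltil < \<gamma> ^ l" using real_arch_pow[OF \<gamma>] by blast
  then have M_le: "M \<le> Ltil * \<gamma> ^ l" using Ltil by (simp add: field_simps)
  show ?thesis
  proof (intro bexI conjI)
    show "\<exists>!u. is_Qmin \<Omega> \<iota> F F' \<alpha> \<beta> p \<epsilon> uk (Ltil * \<gamma> ^ l) u"
      using Qobj_unique_min[OF emb fm p \<epsilon> \<alpha>] \<beta> M M_le by simp
  qed (use desc \<epsilon> M_le in \<open>auto simp: Lset_def\<close>)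
qed

lemma algorithm_A_Lk_bounded:
  assumes alg: "algorithm_A \<Omega> \<iota> F F' \<alpha> \<beta> p \<gamma> Ltil eps u Lk" and bdd: "bounded (range u)"
  shows "bounded (range Lk)"
proof -
  have \<gamma>: "1 < \<gamma>" and Ltil: "0 < Ltil" and eps: "\<And>k. 0 < eps k"
    and step: "\<And>k. Lk k \<in> Lset Ltil \<gamma>"
    using alg unfolding algorithm_A_def by auto
  have minimal: "\<And>k L' w. L' \<in> Lset Ltil \<gamma> \<Longrightarrow> L' < Lk k \<Longrightarrow>
      is_Qmin \<Omega> \<iota> F F' \<alpha> \<beta> p (eps k) (u k) L' w \<Longrightarrow> \<not> descent F F' (u k) L' w"
    using alg unfolding algorithm_A_def by blast
  obtain X where X: "\<And>k. norm (u k) \<le> X" using bdd unfolding bounded_iff by auto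
  obtain N where N: "\<And>k. norm (F' (u k)) \<le> N"
    using assumption_I_F_bounded_image[OF F bdd] unfolding bounded_iff by auto
  obtain M where desc: "\<forall>\<epsilon> uk L w. 0 < \<epsilon> \<longrightarrow> M \<le> L \<longrightarrow>
      norm (F' uk) \<le> N \<longrightarrow> norm uk \<le> X \<longrightarrow>
      is_Qmin \<Omega> \<iota> F F' \<alpha> \<beta> p \<epsilon> uk L w \<longrightarrow> descent F F' uk L w"
    using descent_for_large_L by blast
  have "Lk k \<le> max Ltil (\<gamma> * M)" for k
  proof (rule ccontr)
    assume big: "\<not> Lk k \<le> max Ltil (\<gamma> * M)"
    then obtain L' where L': "L' \<in> Lset Ltil \<gamma>" "Lk k = \<gamma> * L'"
      using Lset_step_down[OF step[of k]] by force
    have "\<gamma> * M < \<gamma> * L'" "0 < \<gamma> * L'" using big Ltil unfolding L'(2) by auto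
    then have L'_pos: "0 < L'" and "L' < Lk k" "M \<le> L'"
      using \<gamma> unfolding L'(2) by (auto simp: zero_less_mult_iff)
    have "\<exists>!w. is_Qmin \<Omega> \<iota> F F' \<alpha> \<beta> p (eps k) (u k) L' w"
      using \<beta> L'_pos by (intro Qobj_unique_min[OF emb fm p eps \<alpha>]) auto
    then obtain w where w: "is_Qmin \<Omega> \<iota> F F' \<alpha> \<beta> p (eps k) (u k) L' w" by blast
    then show False using desc minimal[OF L'(1) \<open>L' < Lk k\<close> w] eps X N \<open>M \<le> L'\<close> by blast
  qed
  moreover have "0 \<le> Lk k" for k using step[of k] Ltil \<gamma> unfolding Lset_def by auto
  ultimately show ?thesis unfolding bounded_iff by (intro exI[of _ "max Ltil (\<gamma> * M)"]) auto
qed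

end

theorem lemma7p2:
  fixes \<Omega> :: "'a::euclidean_space set"
    and \<iota> :: "'v::{real_inner,complete_space} \<Rightarrow> 'a \<Rightarrow> real"
    and F :: "'v \<Rightarrow> real" and F' :: "'v \<Rightarrow> ('v \<Rightarrow>\<^sub>L real)"
    and \<alpha> \<beta> p :: real
  assumes "bounded_lipschitz_domain \<Omega>"
    and "compact_dense_L2_embedding \<Omega> \<iota>"
    and "assumption_I_F F F'"
    and "\<alpha> > 0" and "\<beta> > 0" and "0 < p" and "p < 1"
  shows "(\<forall>uk \<epsilon> \<gamma> Ltil. \<epsilon> > 0 \<longrightarrow> \<gamma> > 1 \<longrightarrow> Ltil > 0 \<longrightarrow>
            (\<exists>L\<in>Lset Ltil \<gamma>.
               (\<exists>!u. is_Qmin \<Omega> \<iota> F F' \<alpha> \<beta> p \<epsilon> uk L u) \<and>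
               (\<forall>u. is_Qmin \<Omega> \<iota> F F' \<alpha> \<beta> p \<epsilon> uk L u \<longrightarrow> descent F F' uk L u)))
       \<and> (\<forall>\<gamma> Ltil eps u Lk. algorithm_A \<Omega> \<iota> F F' \<alpha> \<beta> p \<gamma> Ltil eps u Lk \<longrightarrow>
            bounded (range u) \<longrightarrow> bounded (range Lk))"
proof -
  have "finite_measure (lebesgue_on \<Omega>)"
    using assms(1) unfolding bounded_lipschitz_domain_def
    by (simp add: bounded_set_imp_lmeasurable finite_measure_lebesgue_on)
  note setting = assms(2) this assms(3-7)
  show ?thesis
    by (auto intro!: exists_descent_L[OF setting] algorithm_A_Lk_bounded[OF setting])
qed

end
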